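(* Let $E=[n]$, let $f:2^E\to\mathbb{Z}_{\ge0}$ be an integer-valued submodular function with $M:=\|f\|_\infty<\infty$, and let $d\in\mathbb{Z}^n$ be nonzero. Let $\hat E=E\cup\{n+1\}$ and, for $C\in\mathbb{R}$, define $\hat f(\cdot;C):2^{\hat E}\to\mathbb{R}$ by \[ \hat f(S;C)=\begin{cases} f(S) & \text{if } n+1\notin S,\\ f(S\setminus\{n+1\})+C & \text{if } n+1\in S\subsetneq \hat E,\\ f(E) & \text{if } S=\hat E,\end{cases} \] and let $\hat F(\cdot;C)$ be the Lovász extension of $\hat f(\cdot;C)$. For $x\in\mathbb{R}^{n+1}$ let $x_{[n]}=(x_1,\dots,x_n)$ and define $h_R(x)=R|1-d^\top x_{[n]}|+R|x_{n+1}|$ and $\Phi(x)=\hat F(x;C)+h_R(x)$. Suppose $C>M\|d\|_1$ and $R>C+M$. Then every minimizer $x^\star$ of $\Phi$ over $\mathbb{R}^{n+1}$ satisfies $d^\top x^\star_{[n]}=1$ and $x^\star_{n+1}=0$, and consequently \[ \min_{x\in\mathbb{R}^{n+1}}\hat F(x;C)+h_R(x)=\min\bigl\{\hat F(x;C):\ x\in\mathbb{R}^{n+1},\ d^\top x_{[n]}=1,\ x_{n+1}=0\bigr\}. \]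
   Context: For a set function $g$ on a finite ground set $V=\{1,\dots,m\}$ and $x\in\mathbb{R}^V$, $x(S)=\sum_{i\in S}x_i$, and the base polytope is $B(g)=\{x: x(S)\le g(S)\ \forall S\subseteq V,\ x(V)=g(V)\}$. The Lovász extension is $G(x)=\max_{v\in B(g)}v^\top x$; equivalently $G(x)=\sum_{i=1}^m x_{\pi_i}(g(S_i)-g(S_{i-1}))$ where $x_{\pi_1}\ge\cdots\ge x_{\pi_m}$ (ties broken lexicographically), $S_i=\{\pi_1,\dots,\pi_i\}$, $S_0=\emptyset$. $\|d\|_1=\sum_i|d_i|$. *)

theory Defs
  imports "HOL-Analysis.Analysis"
begin

text \<open>Ground set V = {1..m}; vectors are functions nat => real (only the
  coordinates 1..m matter).\<close>

definition precedes :: "(nat \<Rightarrow> real) \<Rightarrow> nat \<Rightarrow> nat \<Rightarrow> bool" where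
  "precedes x i j \<longleftrightarrow> x i > x j \<or> (x i = x j \<and> i < j)"

definition sort_perm :: "nat \<Rightarrow> (nat \<Rightarrow> real) \<Rightarrow> nat \<Rightarrow> nat" where
  "sort_perm m x k = (THE j. j \<in> {1..m} \<and> card {i \<in> {1..m}. precedes x i j} = k - 1)"

definition prefix_set :: "nat \<Rightarrow> (nat \<Rightarrow> real) \<Rightarrow> nat \<Rightarrow> nat set" where
  "prefix_set m x i = sort_perm m x ` {1..i}"

definition lovasz_ext :: "nat \<Rightarrow> (nat set \<Rightarrow> real) \<Rightarrow> (nat \<Rightarrow> real) \<Rightarrow> real" where
  "lovasz_ext m g x = (\<Sum>i=1..m. x (sort_perm m x i) *
      (g (prefix_set m x i) - g (prefix_set m x (i - 1))))"

definition submodular_on :: "nat set \<Rightarrow> (nat set \<Rightarrow> int) \<Rightarrow> bool" where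
  "submodular_on E f \<longleftrightarrow> (\<forall>A B. A \<subseteq> E \<longrightarrow> B \<subseteq> E \<longrightarrow> f (A \<union> B) + f (A \<inter> B) \<le> f A + f B)"

definition fhat :: "nat \<Rightarrow> (nat set \<Rightarrow> int) \<Rightarrow> real \<Rightarrow> nat set \<Rightarrow> real" where
  "fhat n f C S = (if Suc n \<notin> S then real_of_int (f S)
                   else if S = {1..Suc n} then real_of_int (f {1..n})
                   else real_of_int (f (S - {Suc n})) + C)"

definition hR :: "nat \<Rightarrow> (nat \<Rightarrow> int) \<Rightarrow> real \<Rightarrow> (nat \<Rightarrow> real) \<Rightarrow> real" where
  "hR n d R x = R * \<bar>1 - (\<Sum>i=1..n. real_of_int (d i) * x i)\<bar> + R * \<bar>x (Suc n)\<bar>"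

end

theory Submission
  imports Defs
begin

text \<open>
  The Lov\'asz extension is a layer-cake integral: if all x_j lie in [a, b], then
  G(x) = integral over [a, b] of g {j. \<tau> \<le> x_j} d\<tau>, plus a g(V) - b g({}).
  Changing one coordinate x_i changes the integrand only between the old and the new
  value of x_i, and there by a marginal value of g at i; so G is K-Lipschitz in x_i
  when all marginals of g at i are bounded by K. For f_hat these bounds are C at n+1
  and C + M at i \<le> n. From any x, setting x_(n+1) to 0 and then moving a coordinate i
  with d_i \<noteq> 0 by (1 - d^T x) / d_i reaches the feasible set and lowers the penalized
  objective by at least (R - C) |x_(n+1)| + (R - C - M) |1 - d^T x| \<ge> 0, which is
  positive unless x was feasible.
\<close>

section \<open>The sorting permutation\<close>

lemma precedes_total: "i \<noteq> j \<Longrightarrow> precedes x i j \<or> precedes x j i"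
  by (auto simp: precedes_def)

lemma precedes_trans: "precedes x i j \<Longrightarrow> precedes x j k \<Longrightarrow> precedes x i k"
  by (auto simp: precedes_def)

lemma precedes_irrefl: "\<not> precedes x i i"
  by (simp add: precedes_def)

definition sort_rank :: "nat \<Rightarrow> (nat \<Rightarrow> real) \<Rightarrow> nat \<Rightarrow> nat" where
  "sort_rank m x j = card {i \<in> {1..m}. precedes x i j}"

lemma sort_rank_less:
  assumes "j \<in> {1..m}"
  shows "sort_rank m x j < m"
proof -
  have "sort_rank m x j \<le> card ({1..m} - {j})"
    unfolding sort_rank_def by (rule card_mono) (auto simp: precedes_irrefl)
  also have "\<dots> < m"
    using assms by auto
  finally show ?thesis .
qed

lemma sort_rank_strict_mono:
  assumes "i \<in> {1..m}" "j \<in> {1..m}" "precedes x i j"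
  shows "sort_rank m x i < sort_rank m x j"
  unfolding sort_rank_def
proof (rule psubset_card_mono)
  show "{p \<in> {1..m}. precedes x p i} \<subset> {p \<in> {1..m}. precedes x p j}"
    using assms precedes_trans[of x _ i j] precedes_irrefl[of x i] by blast
qed simp

lemma inj_on_sort_rank: "inj_on (sort_rank m x) {1..m}"
proof (rule inj_onI)
  fix i j
  assume "i \<in> {1..m}" "j \<in> {1..m}" "sort_rank m x i = sort_rank m x j"
  then show "i = j"
    using precedes_total[of i j x] sort_rank_strict_mono[of i m j x] sort_rank_strict_mono[of j m i x]
    by force
qed

lemma sort_rank_image: "sort_rank m x ` {1..m} = {..<m}"
proof (rule card_subset_eq)
  show "card (sort_rank m x ` {1..m}) = card {..<m}"
    using card_image[OF inj_on_sort_rank[of m x]] by simp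
qed (auto simp: sort_rank_less)

lemma sort_perm_sort_rank_char:
  assumes "k \<in> {1..m}"
  shows "sort_perm m x k \<in> {1..m} \<and> sort_rank m x (sort_perm m x k) = k - 1"
proof -
  have "k - 1 \<in> sort_rank m x ` {1..m}"
    using assms sort_rank_image[of m x] by auto
  then obtain j where "j \<in> {1..m}" "sort_rank m x j = k - 1"
    by auto
  then have "\<exists>!j. j \<in> {1..m} \<and> sort_rank m x j = k - 1"
    using inj_on_sort_rank[of m x] unfolding inj_on_def by metis
  moreover have "sort_perm m x k = (THE j. j \<in> {1..m} \<and> sort_rank m x j = k - 1)"
    by (simp add: sort_perm_def sort_rank_def)
  ultimately show ?thesis
    using theI'[of "\<lambda>j. j \<in> {1..m} \<and> sort_rank m x j = k - 1"] by simp
qed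

lemma sort_perm_sort_rank:
  assumes "j \<in> {1..m}"
  shows "sort_perm m x (sort_rank m x j + 1) = j"
proof -
  have "sort_rank m x j + 1 \<in> {1..m}"
    using sort_rank_less[where x = x, OF assms] by simp
  from sort_perm_sort_rank_char[OF this, of x] show ?thesis
    using assms inj_on_sort_rank[of m x] by (auto dest: inj_onD)
qed

lemma prefix_set_eq:
  assumes "k \<le> m"
  shows "prefix_set m x k = {j \<in> {1..m}. sort_rank m x j < k}"
proof
  show "prefix_set m x k \<subseteq> {j \<in> {1..m}. sort_rank m x j < k}"
    unfolding prefix_set_def using sort_perm_sort_rank_char[of _ m x] assms by fastforce
  show "{j \<in> {1..m}. sort_rank m x j < k} \<subseteq> prefix_set m x k"
  proof
    fix j assume "j \<in> {j \<in> {1..m}. sort_rank m x j < k}"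
    then have "j \<in> {1..m}" "sort_rank m x j + 1 \<in> {1..k}"
      by auto
    then show "j \<in> prefix_set m x k"
      unfolding prefix_set_def by (metis sort_perm_sort_rank image_eqI)
  qed
qed

lemma sort_perm_antimono:
  assumes "1 \<le> k" "k \<le> l" "l \<le> m"
  shows "x (sort_perm m x l) \<le> x (sort_perm m x k)"
proof (rule ccontr)
  have k: "sort_perm m x k \<in> {1..m}" "sort_rank m x (sort_perm m x k) = k - 1"
    using sort_perm_sort_rank_char[of k m x] assms by auto
  have l: "sort_perm m x l \<in> {1..m}" "sort_rank m x (sort_perm m x l) = l - 1"
    using sort_perm_sort_rank_char[of l m x] assms by auto
  assume "\<not> ?thesis"
  then have "precedes x (sort_perm m x l) (sort_perm m x k)"
    by (simp add: precedes_def)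
  from sort_rank_strict_mono[OF l(1) k(1) this] show False
    using k l assms by simp
qed

section \<open>The Lov\'asz extension as a layer-cake integral\<close>

definition sorted_values :: "nat \<Rightarrow> (nat \<Rightarrow> real) \<Rightarrow> real \<Rightarrow> real \<Rightarrow> nat \<Rightarrow> real" where
  "sorted_values m x a b k = (if k = 0 then b else if k \<le> m then x (sort_perm m x k) else a)"

lemma sorted_values_antimono:
  assumes bounds: "\<And>j. j \<in> {1..m} \<Longrightarrow> a \<le> x j \<and> x j \<le> b" and "a \<le> b"
    and "l \<le> k" "k \<le> Suc m"
  shows "sorted_values m x a b k \<le> sorted_values m x a b l"
  using \<open>l \<le> k\<close> \<open>k \<le> Suc m\<close>
proof (induction k)
  case (Suc k)
  have "sorted_values m x a b (Suc k) \<le> sorted_values m x a b k"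
    using Suc.prems bounds[of "sort_perm m x 1"] bounds[of "sort_perm m x k"] \<open>a \<le> b\<close>
      sort_perm_sort_rank_char[of 1 m x] sort_perm_sort_rank_char[of k m x]
      sort_perm_antimono[of k "Suc k" m x]
    by (auto simp: sorted_values_def)
  with Suc show ?case
    by (cases "l = Suc k") auto
qed simp

lemma sorted_values_sort_rank:
  assumes "j \<in> {1..m}"
  shows "sorted_values m x a b (sort_rank m x j + 1) = x j"
  using sort_perm_sort_rank[OF assms, of x] sort_rank_less[where x = x, OF assms]
  by (simp add: sorted_values_def)

lemma level_set_eq_prefix_set:
  assumes bounds: "\<And>j. j \<in> {1..m} \<Longrightarrow> a \<le> x j \<and> x j \<le> b" and "a \<le> b"
    and "k \<le> m" "sorted_values m x a b (Suc k) < \<tau>" "\<tau> < sorted_values m x a b k"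
  shows "{j \<in> {1..m}. \<tau> \<le> x j} = prefix_set m x k"
proof -
  have "\<tau> \<le> x j \<longleftrightarrow> sort_rank m x j < k" if "j \<in> {1..m}" for j
    using sorted_values_antimono[of m a x b "Suc k" "sort_rank m x j + 1", OF bounds \<open>a \<le> b\<close>]
      sorted_values_antimono[of m a x b "sort_rank m x j + 1" k, OF bounds \<open>a \<le> b\<close>]
      sorted_values_sort_rank[OF that, of x a b] sort_rank_less[where x = x, OF that] assms(3-)
    by (cases "sort_rank m x j < k") auto
  then show ?thesis
    using prefix_set_eq[OF \<open>k \<le> m\<close>] by auto
qed

lemma summation_by_parts_nat:
  fixes p s :: "nat \<Rightarrow> real"
  shows "(\<Sum>l<Suc m. (p l - p (Suc l)) * s l) =
    p 0 * s 0 - p (Suc m) * s m + (\<Sum>k=1..m. p k * (s k - s (k - 1)))"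
  by (induction m) (simp_all add: algebra_simps)

lemma lovasz_ext_has_integral:
  fixes g :: "nat set \<Rightarrow> real"
  assumes bounds: "\<And>j. j \<in> {1..m} \<Longrightarrow> a \<le> x j \<and> x j \<le> b" and "a \<le> b"
  shows "((\<lambda>\<tau>. g {j \<in> {1..m}. \<tau> \<le> x j}) has_integral
           (lovasz_ext m g x - a * g {1..m} + b * g {})) {a..b}"
proof -
  let ?h = "\<lambda>\<tau>. g {j \<in> {1..m}. \<tau> \<le> x j}"
  define p where "p = sorted_values m x a b"
  define S where "S = prefix_set m x"
  note p_antimono = sorted_values_antimono[of m a x b, OF bounds \<open>a \<le> b\<close>, folded p_def]
  have piece: "(?h has_integral ((p k - p (Suc k)) * g (S k))) {p (Suc k)..p k}"
    if "k \<le> m" for k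
  proof (rule has_integral_spike_finite[of "{p (Suc k), p k}"])
    show "((\<lambda>\<tau>. g (S k)) has_integral ((p k - p (Suc k)) * g (S k))) {p (Suc k)..p k}"
      using has_integral_const_real[of "g (S k)" "p (Suc k)" "p k"] p_antimono[of k "Suc k"] that
      by simp
    show "?h \<tau> = g (S k)" if "\<tau> \<in> {p (Suc k)..p k} - {p (Suc k), p k}" for \<tau>
      using level_set_eq_prefix_set[of m a x b, OF bounds \<open>a \<le> b\<close> \<open>k \<le> m\<close>] that
      by (simp add: p_def S_def)
  qed auto
  have partial: "(?h has_integral (\<Sum>l<k. (p l - p (Suc l)) * g (S l))) {p k..b}"
    if "k \<le> Suc m" for k
    using that
  proof (induction k)
    case 0
    show ?case
      using has_integral_refl(1)[of ?h b] by (simp add: p_def sorted_values_def)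
  next
    case (Suc k)
    have "p k \<le> b"
      using p_antimono[of 0 k] Suc.prems by (simp add: p_def sorted_values_def)
    with Suc have "(?h has_integral ((p k - p (Suc k)) * g (S k) +
        (\<Sum>l<k. (p l - p (Suc l)) * g (S l)))) {p (Suc k)..b}"
      by (intro has_integral_combine[OF p_antimono[of k "Suc k"]] piece) auto
    then show ?case
      by (simp add: add.commute)
  qed
  have "lovasz_ext m g x = (\<Sum>k=1..m. p k * (g (S k) - g (S (k - 1))))"
    unfolding lovasz_ext_def by (rule sum.cong) (auto simp: p_def S_def sorted_values_def)
  moreover have "S 0 = {}" "S m = {1..m}"
    using sort_rank_less by (auto simp: S_def prefix_set_eq)
  ultimately have "(\<Sum>l<Suc m. (p l - p (Suc l)) * g (S l)) = lovasz_ext m g x - a * g {1..m} + b * g {}"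
    unfolding summation_by_parts_nat[of p "\<lambda>k. g (S k)"] by (simp add: p_def sorted_values_def)
  with partial[of "Suc m"] show ?thesis
    by (simp add: p_def sorted_values_def)
qed

lemma lovasz_ext_update_le:
  fixes g :: "nat set \<Rightarrow> real"
  assumes i: "i \<in> {1..m}" and "0 \<le> K"
    and marginal: "\<And>A. A \<subseteq> {1..m} - {i} \<Longrightarrow> \<bar>g (insert i A) - g A\<bar> \<le> K"
  shows "lovasz_ext m g (x(i := y)) - lovasz_ext m g x \<le> K * \<bar>y - x i\<bar>"
proof -
  define T where "T = insert y (x ` {1..m})"
  define a where "a = Min T"
  define b where "b = Max T"
  define lo where "lo = min (x i) y"
  define hi where "hi = max (x i) y"
  have T_bounds: "a \<le> t \<and> t \<le> b" if "t \<in> T" for t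
    using that by (auto simp: a_def b_def T_def)
  have "y \<in> T" "x i \<in> T"
    using i by (auto simp: T_def)
  from T_bounds[OF this(1)] T_bounds[OF this(2)]
  have "a \<le> b" "a \<le> lo" "lo \<le> hi" "hi \<le> b"
    by (auto simp: lo_def hi_def)
  have bounds: "a \<le> x j \<and> x j \<le> b" "a \<le> (x(i := y)) j \<and> (x(i := y)) j \<le> b"
    if "j \<in> {1..m}" for j
    using T_bounds that by (auto simp: T_def)
  have "((\<lambda>\<tau>. g {j \<in> {1..m}. \<tau> \<le> (x(i := y)) j} - g {j \<in> {1..m}. \<tau> \<le> x j}) has_integral
      (lovasz_ext m g (x(i := y)) - lovasz_ext m g x)) {a..b}"
    using has_integral_diff[OF lovasz_ext_has_integral[of m a "x(i := y)" b g, OF bounds(2) \<open>a \<le> b\<close>]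
        lovasz_ext_has_integral[of m a x b g, OF bounds(1) \<open>a \<le> b\<close>]]
    by (simp add: algebra_simps)
  moreover have "((\<lambda>\<tau>. if \<tau> \<in> {lo..hi} then K else 0) has_integral (K * (hi - lo))) {a..b}"
    using has_integral_restrict_closed_subintervals_eq[of lo hi a b "\<lambda>_. K"]
      has_integral_const_real[of K lo hi] \<open>a \<le> lo\<close> \<open>lo \<le> hi\<close> \<open>hi \<le> b\<close>
    by (simp add: mult.commute)
  moreover have "g {j \<in> {1..m}. \<tau> \<le> (x(i := y)) j} - g {j \<in> {1..m}. \<tau> \<le> x j}
      \<le> (if \<tau> \<in> {lo..hi} then K else 0)" for \<tau>
  proof -
    define A where "A = {j \<in> {1..m} - {i}. \<tau> \<le> x j}"
    have "{j \<in> {1..m}. \<tau> \<le> x j} = (if \<tau> \<le> x i then insert i A else A)"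
      "{j \<in> {1..m}. \<tau> \<le> (x(i := y)) j} = (if \<tau> \<le> y then insert i A else A)"
      using i by (auto simp: A_def)
    moreover have "\<bar>g (insert i A) - g A\<bar> \<le> K"
      by (rule marginal) (auto simp: A_def)
    ultimately show ?thesis
      using \<open>0 \<le> K\<close> by (auto simp: lo_def hi_def abs_le_iff)
  qed
  ultimately have "lovasz_ext m g (x(i := y)) - lovasz_ext m g x \<le> K * (hi - lo)"
    by (rule has_integral_le)
  also have "hi - lo = \<bar>y - x i\<bar>"
    by (auto simp: lo_def hi_def)
  finally show ?thesis .
qed

lemma fhat_minus_f_bounds:
  assumes "0 \<le> C"
  shows "0 \<le> fhat n f C S - f (S - {Suc n}) \<and> fhat n f C S - f (S - {Suc n}) \<le> C"
proof -
  have "{1..Suc n} - {Suc n} = {1..n}"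
    by auto
  then show ?thesis
    using assms by (auto simp: fhat_def)
qed

lemma fhat_marginal_last_le:
  assumes "0 \<le> C"
  shows "\<bar>fhat n f C (insert (Suc n) A) - fhat n f C A\<bar> \<le> C"
  using fhat_minus_f_bounds[OF assms, of n f A]
    fhat_minus_f_bounds[OF assms, of n f "insert (Suc n) A"]
  by (simp add: abs_le_iff)

lemma fhat_marginal_le:
  fixes M :: real
  assumes f_range: "\<And>S. S \<subseteq> {1..n} \<Longrightarrow> 0 \<le> f S \<and> f S \<le> M" and "0 \<le> C"
    and "i \<in> {1..n}" "A \<subseteq> {1..Suc n} - {i}"
  shows "\<bar>fhat n f C (insert i A) - fhat n f C A\<bar> \<le> C + M"
proof -
  have "\<bar>f (insert i A - {Suc n}) - f (A - {Suc n})\<bar> \<le> M"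
    using f_range[of "insert i A - {Suc n}"] f_range[of "A - {Suc n}"] assms(3,4)
    by (force simp: abs_le_iff)
  then show ?thesis
    using fhat_minus_f_bounds[OF \<open>0 \<le> C\<close>, of n f A]
      fhat_minus_f_bounds[OF \<open>0 \<le> C\<close>, of n f "insert i A"]
    by (simp add: abs_le_iff)
qed

lemma lovasz_ext_fhat_feasible_le:
  fixes M :: real
  assumes f_range: "\<And>S. S \<subseteq> {1..n} \<Longrightarrow> 0 \<le> f S \<and> f S \<le> M" and "0 \<le> C"
    and i: "i \<in> {1..n}" "d i \<noteq> 0"
  defines "G \<equiv> lovasz_ext (Suc n) (fhat n f C)"
    and "s \<equiv> \<lambda>x. \<Sum>j=1..n. real_of_int (d j) * x j"
  obtains x' where "s x' = 1" "x' (Suc n) = 0"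
    "G x' \<le> G x + C * \<bar>x (Suc n)\<bar> + (C + M) * \<bar>1 - s x\<bar>"
proof
  have "0 \<le> M"
    using f_range[of "{}"] by simp
  define x1 where "x1 = x(Suc n := 0)"
  define \<delta> where "\<delta> = (1 - s x) / d i"
  define x' where "x' = x1(i := x1 i + \<delta>)"
  have "G x1 - G x \<le> C * \<bar>0 - x (Suc n)\<bar>"
    unfolding G_def x1_def
    by (rule lovasz_ext_update_le) (use \<open>0 \<le> C\<close> fhat_marginal_last_le in auto)
  moreover have "G x' - G x1 \<le> (C + M) * \<bar>x1 i + \<delta> - x1 i\<bar>"
    unfolding G_def x'_def
    by (rule lovasz_ext_update_le) (use \<open>0 \<le> C\<close> \<open>0 \<le> M\<close> fhat_marginal_le f_range i in auto)
  moreover have "\<bar>\<delta>\<bar> \<le> \<bar>1 - s x\<bar>"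
  proof -
    have "1 \<le> \<bar>real_of_int (d i)\<bar>"
      using i by linarith
    from mult_left_mono[OF this, of "\<bar>1 - s x\<bar>"] show ?thesis
      using i by (simp add: \<delta>_def abs_divide divide_le_eq)
  qed
  ultimately show "G x' \<le> G x + C * \<bar>x (Suc n)\<bar> + (C + M) * \<bar>1 - s x\<bar>"
    using mult_left_mono[of "\<bar>\<delta>\<bar>" "\<bar>1 - s x\<bar>" "C + M"] \<open>0 \<le> C\<close> \<open>0 \<le> M\<close> by simp
  have "s x1 = s x"
    unfolding s_def x1_def by (rule sum.cong) auto
  have "s x' = (\<Sum>j=1..n. d j * x1 j + (if j = i then d j * \<delta> else 0))"
    unfolding s_def x'_def by (rule sum.cong) (auto simp: algebra_simps)
  also have "\<dots> = s x + d i * \<delta>"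
    using i \<open>s x1 = s x\<close> by (simp add: sum.distrib s_def)
  also have "\<dots> = 1"
    using i by (simp add: \<delta>_def)
  finally show "s x' = 1" .
  show "x' (Suc n) = 0"
    using i by (simp add: x'_def x1_def)
qed

section \<open>Exact penalty\<close>

lemma exact_penalty_minimizer:
  fixes \<Phi> G q :: "'a \<Rightarrow> real"
  assumes "\<And>x. x \<in> F \<Longrightarrow> \<Phi> x = G x"
    and "\<And>x. \<exists>x' \<in> F. G x' + q x \<le> \<Phi> x"
    and "\<And>x. q x = 0 \<Longrightarrow> x \<in> F" "\<And>x. 0 \<le> q x"
    and "\<forall>y. \<Phi> x \<le> \<Phi> y"
  shows "x \<in> F"
proof -
  obtain x' where "x' \<in> F" "G x' + q x \<le> \<Phi> x"
    using assms(2) by blast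
  moreover have "\<Phi> x \<le> G x'"
    using assms(1,5) \<open>x' \<in> F\<close> by metis
  ultimately have "q x = 0"
    using assms(4)[of x] by linarith
  then show ?thesis
    by (rule assms(3))
qed

lemma exact_penalty_INF:
  fixes \<Phi> G q :: "'a \<Rightarrow> real"
  assumes "\<And>x. x \<in> F \<Longrightarrow> \<Phi> x = G x"
    and "\<And>x. \<exists>x' \<in> F. G x' + q x \<le> \<Phi> x"
    and "\<And>x. 0 \<le> q x"
  shows "(INF x. ereal (\<Phi> x)) = (INF x \<in> F. ereal (G x))"
proof (rule antisym)
  show "(INF x. ereal (\<Phi> x)) \<le> (INF x \<in> F. ereal (G x))"
    using assms(1) by (intro INF_greatest) (metis INF_lower UNIV_I)
  show "(INF x \<in> F. ereal (G x)) \<le> (INF x. ereal (\<Phi> x))"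
  proof (rule INF_greatest)
    fix x
    obtain x' where "x' \<in> F" "G x' + q x \<le> \<Phi> x"
      using assms(2) by blast
    then have "(INF x \<in> F. ereal (G x)) \<le> ereal (G x')" "G x' \<le> \<Phi> x"
      using assms(3)[of x] by (auto intro: INF_lower)
    then show "(INF x \<in> F. ereal (G x)) \<le> ereal (\<Phi> x)"
      by (metis ereal_less_eq(3) order_trans)
  qed
qed

theorem lemma5:
  fixes n :: nat and f :: "nat set \<Rightarrow> int" and d :: "nat \<Rightarrow> int" and C R :: real
  assumes f_nonneg: "\<forall>S. S \<subseteq> {1..n} \<longrightarrow> f S \<ge> 0"
    and f_submod: "submodular_on {1..n} f"
    and d_nonzero: "\<exists>i\<in>{1..n}. d i \<noteq> 0"
    and hC: "C > real_of_int (Max (f ` Pow {1..n})) * (\<Sum>i=1..n. real_of_int \<bar>d i\<bar>)"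
    and hR: "R > C + real_of_int (Max (f ` Pow {1..n}))"
  shows "(\<forall>xs :: nat \<Rightarrow> real.
            (\<forall>y :: nat \<Rightarrow> real. lovasz_ext (Suc n) (fhat n f C) xs + hR n d R xs
                               \<le> lovasz_ext (Suc n) (fhat n f C) y + hR n d R y)
            \<longrightarrow> (\<Sum>i=1..n. real_of_int (d i) * xs i) = 1 \<and> xs (Suc n) = 0)
       \<and> (INF x :: nat \<Rightarrow> real. ereal (lovasz_ext (Suc n) (fhat n f C) x + hR n d R x))
         = (INF x \<in> {x :: nat \<Rightarrow> real. (\<Sum>i=1..n. real_of_int (d i) * x i) = 1 \<and> x (Suc n) = 0}.
              ereal (lovasz_ext (Suc n) (fhat n f C) x))"
proof -
  define M where "M = real_of_int (Max (f ` Pow {1..n}))"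
  define G where "G = lovasz_ext (Suc n) (fhat n f C)"
  define s where "s x = (\<Sum>i=1..n. real_of_int (d i) * x i)" for x :: "nat \<Rightarrow> real"
  define F where "F = {x. s x = 1 \<and> x (Suc n) = 0}"
  define q where "q x = (R - C) * \<bar>x (Suc n)\<bar> + (R - C - M) * \<bar>1 - s x\<bar>" for x
  have f_range: "0 \<le> f S \<and> f S \<le> M" if "S \<subseteq> {1..n}" for S
    using f_nonneg that Max_ge[of "f ` Pow {1..n}" "f S"] by (auto simp: M_def)
  have "0 \<le> M"
    using f_range[of "{}"] by simp
  then have "0 \<le> M * (\<Sum>i=1..n. real_of_int \<bar>d i\<bar>)"
    by (intro mult_nonneg_nonneg sum_nonneg) auto
  then have "0 \<le> C"
    using hC by (simp add: M_def)
  obtain i where i: "i \<in> {1..n}" "d i \<noteq> 0"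
    using d_nonzero by blast
  have feasible: "G x + hR n d R x = G x" if "x \<in> F" for x
    using that by (simp add: hR_def F_def s_def)
  have reduce: "\<exists>x' \<in> F. G x' + q x \<le> G x + hR n d R x" for x
  proof -
    obtain x' where "s x' = 1" "x' (Suc n) = 0"
      "G x' \<le> G x + C * \<bar>x (Suc n)\<bar> + (C + M) * \<bar>1 - s x\<bar>"
      using lovasz_ext_fhat_feasible_le[of n f M C i d, OF f_range \<open>0 \<le> C\<close> i]
      unfolding G_def s_def by blast
    then show ?thesis
      by (intro bexI[of _ x']) (auto simp: F_def q_def hR_def s_def algebra_simps)
  qed
  have q_nonneg: "0 \<le> q x" for x
    using hR \<open>0 \<le> M\<close> by (simp add: q_def M_def)
  have "x \<in> F" if "q x = 0" for x
    using that hR q_nonneg[of x] \<open>0 \<le> M\<close> by (simp add: q_def F_def M_def add_nonneg_eq_0_iff)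
  with q_nonneg have "(\<forall>x. (\<forall>y. G x + hR n d R x \<le> G y + hR n d R y) \<longrightarrow> x \<in> F)"
    using exact_penalty_minimizer[OF feasible reduce] by blast
  with exact_penalty_INF[OF feasible reduce q_nonneg] show ?thesis
    unfolding G_def F_def s_def by simp
qed

end
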